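(* Let $0<t\le k<n$ be integers. (i) If a Steiner system $S(t,k,n)$ exists, then for $w=k$ and every $q\ge \binom{n-1}{t-1}/\binom{w-1}{t-1}+1$ there is an $(n,w,2w-t+1)_q$ code of size $\binom{n}{t}/\binom{w}{t}$, and it attains the code--anticode bound with the anticode $A'_q(n,w,t)$, i.e. its size times $|A'_q(n,w,t)|$ equals $|J_q(n,w)|$. Moreover the supports of its codewords are exactly the blocks of the given $S(t,k,n)$. (ii) If a Steiner system $S(t,k,n)$ exists, then for $w=n-k$ and every $q\ge \binom{n}{t}/\binom{k}{t}-\binom{n-1}{t-1}/\binom{k-1}{t-1}+1$ there is an $(n,w,n-t+1)_q$ code of size $\binom{n}{t}/\binom{n-w}{t}$, which attains the code--anticode bound with the anticode $A''_q(n,w,t)$. Moreover the complements of the supports of its codewords are exactly the blocks of the given $S(t,k,n)$. (iii) If no Steiner system $S(t,k,n)$ exists, then for no $q$ does there exist an $(n,k,2k-t+1)_q$ code of size $\binom{n}{t}/\binom{k}{t}$, nor an $(n,n-k,n-t+1)_q$ code of size $\binom{n}{t}/\binom{k}{t}$.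
   Context: $\mathbb{Z}_q=\{0,\dots,q-1\}$ (an alphabet), $[n]=\{1,\dots,n\}$; $\mathrm{supp}(x)=\{i:x_i\ne0\}$, $\mathrm{wt}(x)=|\mathrm{supp}(x)|$, $d$ = Hamming distance; $J_q(n,w)$ = weight-$w$ words of $\mathbb{Z}_q^n$. An $(n,w,d)_q$ code of size $M$ is a subset $C\subseteq J_q(n,w)$ with $|C|=M\ge 2$ and $d(x,y)\ge d$ for all distinct $x,y\in C$. A Steiner system $S(t,k,n)$ ($0<t\le k<n$) is a pair $(N,B)$ with $|N|=n$ and $B$ a set of $k$-subsets of $N$ (blocks) such that every $t$-subset of $N$ is contained in exactly one block. The anticodes are $A'_q(n,w,t)=\{a\in\mathbb{Z}_q^n: \mathrm{wt}((a_1,\dots,a_t))=t,\ \mathrm{wt}((a_{t+1},\dots,a_n))=w-t\}$ and $A''_q(n,w,t)=\{a\in\mathbb{Z}_q^n: a_1=\dots=a_t=0,\ \mathrm{wt}((a_{t+1},\dots,a_n))=w\}$; they have diameters $2w-t$ and $n-t$ respectively. A code attains the code--anticode bound with anticode $A$ if $|C|\cdot|A|=|J_q(n,w)|$. *)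

theory Defs
  imports Complex_Main
begin

text \<open>Words of \<Z>_q^n are functions nat => nat, with coordinates 1..n taking values
  in {0..<q} and all other coordinates equal to 0.\<close>

definition words :: "nat \<Rightarrow> nat \<Rightarrow> (nat \<Rightarrow> nat) set" where
  "words q n = {x. (\<forall>i\<in>{1..n}. x i < q) \<and> (\<forall>i. i \<notin> {1..n} \<longrightarrow> x i = 0)}"

definition supp :: "nat \<Rightarrow> (nat \<Rightarrow> nat) \<Rightarrow> nat set" where
  "supp n x = {i\<in>{1..n}. x i \<noteq> 0}"

definition wt :: "nat \<Rightarrow> (nat \<Rightarrow> nat) \<Rightarrow> nat" where
  "wt n x = card (supp n x)"

definition hdist :: "nat \<Rightarrow> (nat \<Rightarrow> nat) \<Rightarrow> (nat \<Rightarrow> nat) \<Rightarrow> nat" where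
  "hdist n x y = card {i\<in>{1..n}. x i \<noteq> y i}"

definition Jq :: "nat \<Rightarrow> nat \<Rightarrow> nat \<Rightarrow> (nat \<Rightarrow> nat) set" where
  "Jq q n w = {x \<in> words q n. wt n x = w}"

definition is_code :: "nat \<Rightarrow> nat \<Rightarrow> nat \<Rightarrow> nat \<Rightarrow> (nat \<Rightarrow> nat) set \<Rightarrow> bool" where
  "is_code q n w d C \<longleftrightarrow> C \<subseteq> Jq q n w \<and> finite C \<and> card C \<ge> 2 \<and>
     (\<forall>x\<in>C. \<forall>y\<in>C. x \<noteq> y \<longrightarrow> hdist n x y \<ge> d)"

definition steiner_system :: "nat \<Rightarrow> nat \<Rightarrow> nat \<Rightarrow> 'a set \<Rightarrow> 'a set set \<Rightarrow> bool" where
  "steiner_system t k n N B \<longleftrightarrow> 0 < t \<and> t \<le> k \<and> k < n \<and> finite N \<and> card N = n \<and>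
     (\<forall>b\<in>B. b \<subseteq> N \<and> card b = k) \<and>
     (\<forall>T. T \<subseteq> N \<and> card T = t \<longrightarrow> (\<exists>!b. b \<in> B \<and> T \<subseteq> b))"

definition anticode1 :: "nat \<Rightarrow> nat \<Rightarrow> nat \<Rightarrow> nat \<Rightarrow> (nat \<Rightarrow> nat) set" where
  "anticode1 q n w t = {a \<in> words q n. (\<forall>i\<in>{1..t}. a i \<noteq> 0) \<and>
      card {i\<in>{t+1..n}. a i \<noteq> 0} = w - t}"

definition anticode2 :: "nat \<Rightarrow> nat \<Rightarrow> nat \<Rightarrow> nat \<Rightarrow> (nat \<Rightarrow> nat) set" where
  "anticode2 q n w t = {a \<in> words q n. (\<forall>i\<in>{1..t}. a i = 0) \<and>
      card {i\<in>{t+1..n}. a i \<noteq> 0} = w}"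

end

theory Submission
  imports Defs "HOL-Library.FuncSet"
begin

text \<open>In an \<open>S(t,k,n)\<close> every point lies on \<open>r = C(n-1,t-1)/C(k-1,t-1)\<close> blocks and
  two distinct blocks meet in fewer than \<open>t\<close> points. Give each block \<open>b\<close> a word with
  support \<open>b\<close>, using at every point distinct nonzero symbols for the \<open>r\<close> blocks through it;
  this needs only \<open>q - 1 \<ge> r\<close>. Two such words differ exactly on \<open>b \<union> b'\<close>, which has
  \<open>2k - |b \<inter> b'| > 2k - t\<close> elements. Doing the same with the complements of the blocks (through
  each point pass \<open>|B| - r\<close> of them) gives words that differ on the complement of \<open>b \<inter> b'\<close>.
  Conversely, the distance bound forces the supports (resp. their complements) of a code of size
  \<open>C(n,t)/C(k,t)\<close> to be distinct \<open>k\<close>-sets pairwise sharing fewer than \<open>t\<close> points; these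
  contain \<open>C(n,t)\<close> pairwise different \<open>t\<close>-subsets, i.e. all of them, so they form an \<open>S(t,k,n)\<close>.\<close>

lemma card_supersets:
  assumes "finite A" "S \<subseteq> A" "card S \<le> m"
  shows "card {T. S \<subseteq> T \<and> T \<subseteq> A \<and> card T = m} = (card A - card S) choose (m - card S)"
proof -
  have fin: "finite S" "\<And>U. U \<subseteq> A - S \<Longrightarrow> finite U"
    using assms finite_subset by blast+
  have "bij_betw (\<lambda>U. S \<union> U) {U. U \<subseteq> A - S \<and> card U = m - card S}
          {T. S \<subseteq> T \<and> T \<subseteq> A \<and> card T = m}"
  proof (rule bij_betw_byWitness[where f' = "\<lambda>T. T - S"])
    show "(\<lambda>U. S \<union> U) ` {U. U \<subseteq> A - S \<and> card U = m - card S}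
            \<subseteq> {T. S \<subseteq> T \<and> T \<subseteq> A \<and> card T = m}"
      using assms fin by (auto; subst card_Un_disjoint) auto
    show "(\<lambda>T. T - S) ` {T. S \<subseteq> T \<and> T \<subseteq> A \<and> card T = m}
            \<subseteq> {U. U \<subseteq> A - S \<and> card U = m - card S}"
      using fin by (auto simp: card_Diff_subset)
  qed auto
  then have "card {T. S \<subseteq> T \<and> T \<subseteq> A \<and> card T = m} = card (A - S) choose (m - card S)"
    using assms(1) by (simp add: bij_betw_same_card[symmetric] n_subsets)
  then show ?thesis
    using assms fin by (simp add: card_Diff_subset)
qed

lemma real_eq_divide_iff:
  assumes "0 < b"
  shows "real c = real a / real b \<longleftrightarrow> c * b = a"
  using assms by (simp add: eq_divide_eq flip: of_nat_mult)

lemma steiner_systemD: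
  assumes "steiner_system t k n N B"
  shows "0 < t" "t \<le> k" "k < n" "finite N" "card N = n"
    "\<And>b. b \<in> B \<Longrightarrow> b \<subseteq> N" "\<And>b. b \<in> B \<Longrightarrow> card b = k"
    "\<And>T. T \<subseteq> N \<Longrightarrow> card T = t \<Longrightarrow> \<exists>!b. b \<in> B \<and> T \<subseteq> b"
  using assms unfolding steiner_system_def by simp_all

lemma steiner_system_finite_blocks:
  assumes "steiner_system t k n N B"
  shows "finite B"
  using steiner_systemD[OF assms] by (meson Pow_iff finite_Pow_iff finite_subset subsetI)

lemma steiner_card_blocks_containing:
  assumes st: "steiner_system t k n N B" and "S \<subseteq> N" "card S \<le> t"
  shows "card {b\<in>B. S \<subseteq> b} * ((k - card S) choose (t - card S)) = (n - card S) choose (t - card S)"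
proof -
  note st' = steiner_systemD[OF st]
  define TT where "TT = {T. S \<subseteq> T \<and> T \<subseteq> N \<and> card T = t}"
  have "finite TT"
    unfolding TT_def using st'(4) by (auto intro: rev_finite_subset[of "Pow N"])
  have fB: "finite B" using steiner_system_finite_blocks[OF st] .
  have unique: "card {b\<in>B. T \<subseteq> b} = 1" if T: "T \<in> TT" for T
  proof -
    obtain b where "b \<in> B \<and> T \<subseteq> b" "\<And>b'. b' \<in> B \<and> T \<subseteq> b' \<Longrightarrow> b' = b"
      using st'(8)[of T] T unfolding TT_def by blast
    then have "{b\<in>B. T \<subseteq> b} = {b}" by blast
    then show ?thesis by simp
  qed
  have inside: "card {T\<in>TT. T \<subseteq> b} = (if S \<subseteq> b then (k - card S) choose (t - card S) else 0)"
    if "b \<in> B" for b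
  proof -
    have "finite b" using st'(4,6) that finite_subset by blast
    moreover have "{T\<in>TT. T \<subseteq> b} = (if S \<subseteq> b then {T. S \<subseteq> T \<and> T \<subseteq> b \<and> card T = t} else {})"
      unfolding TT_def using st'(6)[OF that] by auto
    ultimately show ?thesis using card_supersets[of b S t] assms(3) st'(7) that by simp
  qed
  have "card TT = (\<Sum>T\<in>TT. card {b\<in>B. T \<subseteq> b})"
    using unique by simp
  also have "\<dots> = (\<Sum>b\<in>B. card {T\<in>TT. T \<subseteq> b})"
    using sum.swap_restrict[OF \<open>finite TT\<close> fB, of "\<lambda>_ _. 1::nat" "\<lambda>T b. T \<subseteq> b"] by simp
  also have "\<dots> = card {b\<in>B. S \<subseteq> b} * ((k - card S) choose (t - card S))"
    using fB by (simp add: inside sum.If_cases Int_def)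
  finally show ?thesis
    using card_supersets[OF st'(4) assms(2,3)] st'(5) unfolding TT_def by simp
qed

lemma steiner_card_blocks:
  assumes "steiner_system t k n N B"
  shows "card B * (k choose t) = n choose t"
  using steiner_card_blocks_containing[OF assms, of "{}"] by simp

lemma steiner_card_blocks_through:
  assumes "steiner_system t k n N B" "i \<in> N"
  shows "card {b\<in>B. i \<in> b} * ((k - 1) choose (t - 1)) = (n - 1) choose (t - 1)"
  using steiner_card_blocks_containing[OF assms(1), of "{i}"] assms steiner_systemD(1)[OF assms(1)]
  by simp

lemma steiner_card_blocks_mult_choose_diff:
  assumes "steiner_system t k n N B"
  shows "card B * ((n - t) choose (k - t)) = n choose k"
proof -
  note st = steiner_systemD[OF assms]
  have "(n choose k) * (k choose t) = (n choose t) * ((n - t) choose (k - t))"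
    using choose_mult[of t k n] st(2,3) by simp
  also have "\<dots> = card B * ((n - t) choose (k - t)) * (k choose t)"
    using steiner_card_blocks[OF assms] by simp
  finally show ?thesis
    using st(2) by simp
qed

lemma steiner_two_le_card_blocks:
  assumes "steiner_system t k n N B"
  shows "2 \<le> card B"
proof -
  note st = steiner_systemD[OF assms]
  have "k choose t < Suc k choose t"
    using st(1,2) by (cases t) simp_all
  also have "\<dots> \<le> n choose t"
    using st(3) by (intro binomial_right_mono) simp
  finally have "1 * (k choose t) < card B * (k choose t)"
    using steiner_card_blocks[OF assms] by simp
  then have "1 < card B"
    using mult_less_cancel2 by blast
  then show ?thesis
    by simp
qed

lemma steiner_card_Int_blocks_less:
  assumes st: "steiner_system t k n N B" and "b \<in> B" "b' \<in> B" "b \<noteq> b'"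
  shows "card (b \<inter> b') < t"
proof (rule ccontr)
  assume "\<not> card (b \<inter> b') < t"
  then obtain T where T: "T \<subseteq> b \<inter> b'" "card T = t"
    by (meson not_less obtain_subset_with_card_n)
  then have "T \<subseteq> N"
    using steiner_systemD(6)[OF st \<open>b \<in> B\<close>] by blast
  then show False
    using steiner_systemD(8)[OF st _ T(2)] T(1) assms(2-4) by blast
qed

lemma steiner_card_blocks_through_real:
  assumes "steiner_system t k n N B" "i \<in> N"
  shows "real (card {b\<in>B. i \<in> b}) = real ((n - 1) choose (t - 1)) / real ((k - 1) choose (t - 1))"
  using steiner_card_blocks_through[OF assms] steiner_systemD(1,2)[OF assms(1)]
  by (subst real_eq_divide_iff) simp_all

lemma steiner_card_blocks_real:
  assumes "steiner_system t k n N B"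
  shows "real (card B) = real (n choose t) / real (k choose t)"
  using steiner_card_blocks[OF assms] steiner_systemD(2)[OF assms]
  by (subst real_eq_divide_iff) simp_all

lemma steiner_card_blocks_avoiding_real:
  assumes "steiner_system t k n N B" "i \<in> N"
  shows "real (card {b\<in>B. i \<notin> b}) = real (n choose t) / real (k choose t)
           - real ((n - 1) choose (t - 1)) / real ((k - 1) choose (t - 1))"
proof -
  have "{b\<in>B. i \<notin> b} = B - {b\<in>B. i \<in> b}"
    by blast
  then have "card {b\<in>B. i \<notin> b} = card B - card {b\<in>B. i \<in> b}"
    using steiner_system_finite_blocks[OF assms(1)] by (simp add: card_Diff_subset)
  moreover have "card {b\<in>B. i \<in> b} \<le> card B"
    using steiner_system_finite_blocks[OF assms(1)] by (intro card_mono) auto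
  ultimately show ?thesis
    using steiner_card_blocks_through_real[OF assms] steiner_card_blocks_real[OF assms(1)]
    by (simp add: of_nat_diff)
qed

lemma supp_subset: "supp n x \<subseteq> {1..n}"
  unfolding supp_def by blast

lemma bij_betw_restrict_words_supp:
  assumes "S \<subseteq> {1..n}" "1 \<le> q"
  shows "bij_betw (\<lambda>x. restrict x S) {x\<in>words q n. supp n x = S} (S \<rightarrow>\<^sub>E {1..<q})"
proof (rule bij_betw_byWitness[where f' = "\<lambda>f i. if i \<in> S then f i else 0"])
  show "\<forall>x\<in>{x\<in>words q n. supp n x = S}. (\<lambda>i. if i \<in> S then restrict x S i else 0) = x"
    unfolding words_def supp_def by (auto simp: fun_eq_iff)
  show "\<forall>f\<in>S \<rightarrow>\<^sub>E {1..<q}. restrict (\<lambda>i. if i \<in> S then f i else 0) S = f"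
    by (auto simp: PiE_def extensional_def)
  show "(\<lambda>x. restrict x S) ` {x\<in>words q n. supp n x = S} \<subseteq> S \<rightarrow>\<^sub>E {1..<q}"
    unfolding words_def supp_def by auto
  show "(\<lambda>f i. if i \<in> S then f i else 0) ` (S \<rightarrow>\<^sub>E {1..<q}) \<subseteq> {x\<in>words q n. supp n x = S}"
    using assms unfolding words_def supp_def by (fastforce simp: PiE_def Pi_def)
qed

lemma card_words_supp_in:
  assumes "1 \<le> q" and F: "\<forall>S\<in>F. S \<subseteq> {1..n} \<and> card S = w"
  shows "card {x\<in>words q n. supp n x \<in> F} = card F * (q - 1) ^ w"
proof -
  have "finite F"
    using F by (intro finite_subset[of F "Pow {1..n}"]) auto
  have bij: "bij_betw (\<lambda>x. restrict x S) {x\<in>words q n. supp n x = S} (S \<rightarrow>\<^sub>E {1..<q})"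
    if "S \<in> F" for S
    using bij_betw_restrict_words_supp F that assms(1) by blast
  have "card {x\<in>words q n. supp n x \<in> F} = (\<Sum>S\<in>F. card {x\<in>words q n. supp n x = S})"
  proof -
    have "{x\<in>words q n. supp n x \<in> F} = (\<Union>S\<in>F. {x\<in>words q n. supp n x = S})"
      by blast
    moreover have "finite {x\<in>words q n. supp n x = S}" if "S \<in> F" for S
      using bij_betw_finite[OF bij[OF that]] F that by (auto intro: finite_subset finite_PiE)
    ultimately show ?thesis
      using \<open>finite F\<close> by (subst card_UN_disjoint[symmetric]) auto
  qed
  also have "\<dots> = (\<Sum>S\<in>F. (q - 1) ^ w)"
    using F by (intro sum.cong) (auto simp: bij_betw_same_card[OF bij] card_PiE finite_subset)
  finally show ?thesis
    by simp
qed

lemma card_Jq: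
  assumes "1 \<le> q"
  shows "card (Jq q n w) = (n choose w) * (q - 1) ^ w"
proof -
  have "Jq q n w = {x\<in>words q n. supp n x \<in> {S. S \<subseteq> {1..n} \<and> card S = w}}"
    unfolding Jq_def wt_def using supp_subset by blast
  then show ?thesis
    using card_words_supp_in[OF assms, of "{S. S \<subseteq> {1..n} \<and> card S = w}"]
    by (simp add: n_subsets)
qed

lemma supp_split:
  assumes "t \<le> n"
  shows "supp n a = {i\<in>{1..t}. a i \<noteq> 0} \<union> {i\<in>{t+1..n}. a i \<noteq> 0}"
  unfolding supp_def using assms by auto

lemma card_anticode1:
  assumes "1 \<le> q" "t \<le> w" "w \<le> n"
  shows "card (anticode1 q n w t) = ((n - t) choose (w - t)) * (q - 1) ^ w"
proof -
  let ?F = "{S. {1..t} \<subseteq> S \<and> S \<subseteq> {1..n} \<and> card S = w}"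
  have "a \<in> anticode1 q n w t \<longleftrightarrow> a \<in> words q n \<and> supp n a \<in> ?F" for a
  proof -
    let ?X = "{i\<in>{t+1..n}. a i \<noteq> 0}"
    have "(\<forall>i\<in>{1..t}. a i \<noteq> 0) \<longleftrightarrow> {1..t} \<subseteq> supp n a"
      using assms unfolding supp_def by auto
    moreover have "card (supp n a) = t + card ?X" if "\<forall>i\<in>{1..t}. a i \<noteq> 0"
    proof -
      have "supp n a = {1..t} \<union> ?X"
        using supp_split[of t n a] assms that by auto
      then show ?thesis
        by (simp add: card_Un_disjoint disjoint_iff)
    qed
    ultimately show ?thesis
      unfolding anticode1_def using supp_subset assms by auto
  qed
  then have "anticode1 q n w t = {x\<in>words q n. supp n x \<in> ?F}"
    by blast
  moreover have "card ?F = (n - t) choose (w - t)"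
    using card_supersets[of "{1..n}" "{1..t}" w] assms by simp
  ultimately show ?thesis
    using card_words_supp_in[OF assms(1), of ?F n w] by simp
qed

lemma card_anticode2:
  assumes "1 \<le> q" "t \<le> n"
  shows "card (anticode2 q n w t) = ((n - t) choose w) * (q - 1) ^ w"
proof -
  let ?F = "{S. S \<subseteq> {t+1..n} \<and> card S = w}"
  have "a \<in> anticode2 q n w t \<longleftrightarrow> a \<in> words q n \<and> supp n a \<in> ?F" for a
  proof -
    have "(\<forall>i\<in>{1..t}. a i = 0) \<longleftrightarrow> supp n a \<subseteq> {t+1..n}"
    proof
      assume "\<forall>i\<in>{1..t}. a i = 0"
      then show "supp n a \<subseteq> {t+1..n}"
        unfolding supp_def by (auto simp: not_less_eq_eq[symmetric])
    next
      assume "supp n a \<subseteq> {t+1..n}"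
      then show "\<forall>i\<in>{1..t}. a i = 0"
        using assms unfolding supp_def by fastforce
    qed
    moreover have "supp n a = {i\<in>{t+1..n}. a i \<noteq> 0}" if "\<forall>i\<in>{1..t}. a i = 0"
      using supp_split[of t n a] assms that by auto
    ultimately show ?thesis
      unfolding anticode2_def by auto
  qed
  then have eq: "anticode2 q n w t = {x\<in>words q n. supp n x \<in> ?F}"
    by blast
  have F: "\<forall>S\<in>?F. S \<subseteq> {1..n} \<and> card S = w"
    by auto
  have "card ?F = (n - t) choose w"
    by (simp add: n_subsets)
  then show ?thesis
    unfolding eq card_words_supp_in[OF assms(1) F] by (rule arg_cong)
qed

lemma steiner_anticode1_bound:
  assumes "steiner_system t k n N B" "1 \<le> q"
  shows "card B * card (anticode1 q n k t) = card (Jq q n k)"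
proof -
  note st = steiner_systemD[OF assms(1)]
  show ?thesis
    unfolding card_anticode1[OF assms(2) st(2) less_imp_le[OF st(3)]] card_Jq[OF assms(2)]
    using steiner_card_blocks_mult_choose_diff[OF assms(1)] by (metis mult.assoc)
qed

lemma steiner_anticode2_bound:
  assumes "steiner_system t k n N B" "1 \<le> q"
  shows "card B * card (anticode2 q n (n - k) t) = card (Jq q n (n - k))"
proof -
  note st = steiner_systemD[OF assms(1)]
  have "(n - t) choose (n - k) = (n - t) choose (k - t)" "n choose (n - k) = n choose k"
    using binomial_symmetric[of "n - k" "n - t"] binomial_symmetric[of k n] st(2,3)
    by (simp_all add: diff_diff_eq)
  then show ?thesis
    unfolding card_anticode2[OF assms(2) less_imp_le[OF order.strict_trans1[OF st(2,3)]]]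
      card_Jq[OF assms(2)]
    using steiner_card_blocks_mult_choose_diff[OF assms(1)] by (metis mult.assoc)
qed

lemma hdist_le_card_supp_Un: "hdist n x y \<le> card (supp n x \<union> supp n y)"
  unfolding hdist_def supp_def by (rule card_mono) auto

lemma obtain_words_with_supports:
  assumes "finite F" "\<forall>S\<in>F. S \<subseteq> {1..n}" "\<forall>i\<in>{1..n}. card {S\<in>F. i \<in> S} < q"
  obtains c where "\<forall>S\<in>F. c S \<in> words q n \<and> supp n (c S) = S"
    "\<forall>S\<in>F. \<forall>S'\<in>F. S \<noteq> S' \<longrightarrow> hdist n (c S) (c S') = card (S \<union> S')"
proof -
  have "\<forall>i. \<exists>h. bij_betw h {S\<in>F. i \<in> S} {0..<card {S\<in>F. i \<in> S}}"
    using assms(1) by (intro allI ex_bij_betw_finite_nat) simp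
  then obtain H where H: "\<And>i. bij_betw (H i) {S\<in>F. i \<in> S} {0..<card {S\<in>F. i \<in> S}}"
    by metis
  define c where "c S = (\<lambda>i. if i \<in> S then Suc (H i S) else 0)" for S
  have word: "c S \<in> words q n \<and> supp n (c S) = S" if "S \<in> F" for S
  proof -
    have "S \<subseteq> {1..n}"
      using assms(2) that by blast
    moreover have "c S i < q" if "i \<in> {1..n}" for i
    proof (cases "i \<in> S")
      case True
      then have "H i S < card {S\<in>F. i \<in> S}"
        using bij_betwE[OF H[of i]] \<open>S \<in> F\<close> by auto
      then show ?thesis
        using assms(3) that True unfolding c_def by fastforce
    next
      case False
      then show ?thesis
        using assms(3) that unfolding c_def by fastforce
    qed
    ultimately show ?thesis
      unfolding words_def supp_def c_def by auto
  qed
  have distance: "hdist n (c S) (c S') = card (S \<union> S')" if "S \<in> F" "S' \<in> F" "S \<noteq> S'" for S S'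
  proof -
    have "S \<subseteq> {1..n}" "S' \<subseteq> {1..n}"
      using assms(2) that by blast+
    moreover have "H i S \<noteq> H i S'" if "i \<in> S" "i \<in> S'" for i
      using bij_betw_imp_inj_on[OF H[of i]] \<open>S \<in> F\<close> \<open>S' \<in> F\<close> \<open>S \<noteq> S'\<close> that
      by (auto dest: inj_onD)
    ultimately have "{i\<in>{1..n}. c S i \<noteq> c S' i} = S \<union> S'"
      unfolding c_def by auto
    then show ?thesis
      unfolding hdist_def by simp
  qed
  show ?thesis
  proof (rule that)
    show "\<forall>S\<in>F. c S \<in> words q n \<and> supp n (c S) = S"
      using word by blast
    show "\<forall>S\<in>F. \<forall>S'\<in>F. S \<noteq> S' \<longrightarrow> hdist n (c S) (c S') = card (S \<union> S')"
      using distance by blast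
  qed
qed

lemma code_with_supports:
  assumes "finite F" "2 \<le> card F" "\<forall>S\<in>F. S \<subseteq> {1..n} \<and> card S = w"
    "\<forall>i\<in>{1..n}. card {S\<in>F. i \<in> S} < q"
    "\<forall>S\<in>F. \<forall>S'\<in>F. S \<noteq> S' \<longrightarrow> d \<le> card (S \<union> S')"
  shows "\<exists>C. is_code q n w d C \<and> card C = card F \<and> supp n ` C = F"
proof -
  have "\<forall>S\<in>F. S \<subseteq> {1..n}"
    using assms(3) by blast
  then obtain c where c: "\<forall>S\<in>F. c S \<in> words q n \<and> supp n (c S) = S"
    "\<forall>S\<in>F. \<forall>S'\<in>F. S \<noteq> S' \<longrightarrow> hdist n (c S) (c S') = card (S \<union> S')"
    using obtain_words_with_supports[OF assms(1) _ assms(4)] by blast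
  have "inj_on c F"
    by (rule inj_onI) (use c(1) in metis)
  then have card_code: "card (c ` F) = card F"
    by (rule card_image)
  have "is_code q n w d (c ` F)"
    unfolding is_code_def
  proof (intro conjI ballI impI)
    show "c ` F \<subseteq> Jq q n w"
      using c(1) assms(3) unfolding Jq_def wt_def by auto
    show "finite (c ` F)"
      using assms(1) by simp
    show "2 \<le> card (c ` F)"
      using card_code assms(2) by simp
    fix x y assume "x \<in> c ` F" "y \<in> c ` F" "x \<noteq> y"
    then obtain S S' where "S \<in> F" "S' \<in> F" "S \<noteq> S'" "x = c S" "y = c S'"
      by blast
    then show "d \<le> hdist n x y"
      using c(2) assms(5) by simp
  qed
  moreover have "supp n ` c ` F = F"
    using c(1) by (simp add: image_image)
  ultimately show ?thesis
    using card_code by blast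
qed

lemma card_complements_containing:
  assumes "\<forall>b\<in>B. b \<subseteq> A" "i \<in> A"
  shows "card {S\<in>(\<lambda>b. A - b) ` B. i \<in> S} = card {b\<in>B. i \<notin> b}"
proof -
  have "inj_on (\<lambda>b. A - b) B"
    using assms(1) by (intro inj_onI) (metis double_diff order_refl)
  moreover have "{S\<in>(\<lambda>b. A - b) ` B. i \<in> S} = (\<lambda>b. A - b) ` {b\<in>B. i \<notin> b}"
    using assms(2) by auto
  ultimately show ?thesis
    by (simp add: card_image inj_on_subset)
qed

lemma steiner_block_code:
  assumes st: "steiner_system t k n {1..n} B"
    and q: "real ((n - 1) choose (t - 1)) / real ((k - 1) choose (t - 1)) + 1 \<le> real q"
  shows "\<exists>C. is_code q n k (2*k - t + 1) C
           \<and> real (card C) = real (n choose t) / real (k choose t)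
           \<and> card C * card (anticode1 q n k t) = card (Jq q n k)
           \<and> supp n ` C = B"
proof -
  note st' = steiner_systemD[OF st]
  have blocks: "\<forall>b\<in>B. b \<subseteq> {1..n} \<and> card b = k"
    using st'(6,7) by blast
  have through: "\<forall>i\<in>{1..n}. card {b\<in>B. i \<in> b} < q"
    using steiner_card_blocks_through_real[OF st] q by fastforce
  have far: "\<forall>b\<in>B. \<forall>b'\<in>B. b \<noteq> b' \<longrightarrow> 2*k - t + 1 \<le> card (b \<union> b')"
  proof (intro ballI impI)
    fix b b' assume bb': "b \<in> B" "b' \<in> B" "b \<noteq> b'"
    then have "finite b" "finite b'"
      using blocks finite_subset by blast+
    then have "card (b \<union> b') + card (b \<inter> b') = k + k"
      using card_Un_Int[of b b'] blocks bb' by simp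
    then show "2*k - t + 1 \<le> card (b \<union> b')"
      using steiner_card_Int_blocks_less[OF st bb'] st'(2) by linarith
  qed
  obtain C where C: "is_code q n k (2*k - t + 1) C" "card C = card B" "supp n ` C = B"
    using code_with_supports[OF steiner_system_finite_blocks[OF st]
        steiner_two_le_card_blocks[OF st] blocks through far] by blast
  moreover have "1 \<le> q"
    using through st'(3) by fastforce
  ultimately show ?thesis
    using C steiner_anticode1_bound[OF st] steiner_card_blocks_real[OF st] by auto
qed

lemma steiner_coblock_code:
  assumes st: "steiner_system t k n {1..n} B"
    and q: "real (n choose t) / real (k choose t)
              - real ((n - 1) choose (t - 1)) / real ((k - 1) choose (t - 1)) + 1 \<le> real q"
  shows "\<exists>C. is_code q n (n - k) (n - t + 1) C
           \<and> real (card C) = real (n choose t) / real ((n - (n - k)) choose t)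
           \<and> card C * card (anticode2 q n (n - k) t) = card (Jq q n (n - k))
           \<and> (\<lambda>c. {1..n} - supp n c) ` C = B"
proof -
  note st' = steiner_systemD[OF st]
  define compl where "compl b = {1..n} - b" for b :: "nat set"
  have compl_compl: "compl (compl b) = b" if "b \<in> B" for b
    using st'(6)[OF that] unfolding compl_def by auto
  then have "inj_on compl B"
    by (metis inj_onI)
  have coblocks: "\<forall>S\<in>compl ` B. S \<subseteq> {1..n} \<and> card S = n - k"
  proof
    fix S assume "S \<in> compl ` B"
    then obtain b where "b \<in> B" "S = compl b"
      by blast
    then show "S \<subseteq> {1..n} \<and> card S = n - k"
      using st'(6,7)[OF \<open>b \<in> B\<close>] unfolding compl_def by (simp add: card_Diff_subset finite_subset)
  qed
  have through: "\<forall>i\<in>{1..n}. card {S\<in>compl ` B. i \<in> S} < q"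
    using card_complements_containing[of B "{1..n}"] steiner_card_blocks_avoiding_real[OF st] st'(6) q
    unfolding compl_def by fastforce
  have far: "\<forall>S\<in>compl ` B. \<forall>S'\<in>compl ` B. S \<noteq> S' \<longrightarrow> n - t + 1 \<le> card (S \<union> S')"
  proof (clarify)
    fix b b' assume b: "b \<in> B" "b' \<in> B" "compl b \<noteq> compl b'"
    then have "b \<noteq> b'" "compl b \<union> compl b' = {1..n} - (b \<inter> b')" "b \<inter> b' \<subseteq> {1..n}"
      using st'(6)[OF b(1)] unfolding compl_def by auto
    then have "card (compl b \<union> compl b') = n - card (b \<inter> b')"
      by (simp add: card_Diff_subset finite_subset)
    then show "n - t + 1 \<le> card (compl b \<union> compl b')"
      using steiner_card_Int_blocks_less[OF st b(1,2) \<open>b \<noteq> b'\<close>] st'(2,3) by linarith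
  qed
  have two: "2 \<le> card (compl ` B)"
    using steiner_two_le_card_blocks[OF st] card_image[OF \<open>inj_on compl B\<close>] by simp
  obtain C where C: "is_code q n (n - k) (n - t + 1) C" "card C = card B" "supp n ` C = compl ` B"
    using code_with_supports[OF finite_imageI[OF steiner_system_finite_blocks[OF st]] two coblocks
        through far] card_image[OF \<open>inj_on compl B\<close>] by auto
  have "(\<lambda>c. {1..n} - supp n c) ` C = compl ` compl ` B"
    unfolding compl_def image_image C(3)[symmetric] ..
  also have "\<dots> = B"
    unfolding image_image using compl_compl by simp
  finally have "(\<lambda>c. {1..n} - supp n c) ` C = B" .
  moreover have "1 \<le> q"
    using through st'(3) by fastforce
  ultimately show ?thesis
    using C steiner_anticode2_bound[OF st] steiner_card_blocks_real[OF st] st'(3) by auto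
qed

lemma steiner_system_of_packing:
  assumes "0 < t" "t \<le> k" "k < n" "finite D"
    and D: "\<forall>b\<in>D. b \<subseteq> {1..n} \<and> card b = k"
    and packing: "\<forall>b\<in>D. \<forall>b'\<in>D. b \<noteq> b' \<longrightarrow> card (b \<inter> b') < t"
    and card_D: "card D * (k choose t) = n choose t"
  shows "steiner_system t k n {1..n} D"
proof -
  define tsubsets where "tsubsets A = {T. T \<subseteq> A \<and> card T = t}" for A :: "nat set"
  have finite_block: "finite b" if "b \<in> D" for b
    using D that finite_subset by blast
  have shared: "t \<le> card (b \<inter> b')" if "b \<in> D" "T \<in> tsubsets b" "T \<in> tsubsets b'" for b b' T
    using that finite_block[OF that(1)] card_mono[of "b \<inter> b'" T]
    unfolding tsubsets_def by auto
  have disjoint: "tsubsets b \<inter> tsubsets b' = {}" if "b \<in> D" "b' \<in> D" "b \<noteq> b'" for b b'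
    using shared[OF \<open>b \<in> D\<close>, of _ b'] packing that by (auto simp: not_le[symmetric])
  have "card (\<Union>b\<in>D. tsubsets b) = (\<Sum>b\<in>D. card (tsubsets b))"
    using finite_block disjoint \<open>finite D\<close> by (intro card_UN_disjoint) (auto simp: tsubsets_def)
  also have "\<dots> = card D * (k choose t)"
    using D finite_block by (simp add: tsubsets_def n_subsets)
  also have "\<dots> = card (tsubsets {1..n})"
    using card_D by (simp add: tsubsets_def n_subsets)
  finally have covering: "(\<Union>b\<in>D. tsubsets b) = tsubsets {1..n}"
    using D by (intro card_subset_eq) (auto simp: tsubsets_def)
  have "\<exists>!b. b \<in> D \<and> T \<subseteq> b" if T: "T \<subseteq> {1..n}" "card T = t" for T
  proof -
    have "T \<in> tsubsets {1..n}"
      using T unfolding tsubsets_def by blast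
    then obtain b where b: "b \<in> D" "T \<in> tsubsets b"
      using covering by blast
    show ?thesis
    proof (rule ex1I[of _ b])
      show "b \<in> D \<and> T \<subseteq> b"
        using b unfolding tsubsets_def by blast
      fix b' assume b': "b' \<in> D \<and> T \<subseteq> b'"
      then have "T \<in> tsubsets b \<inter> tsubsets b'"
        using b T unfolding tsubsets_def by blast
      then show "b' = b"
        using disjoint b(1) b' by blast
    qed
  qed
  then show ?thesis
    using assms unfolding steiner_system_def by simp
qed

lemma inj_on_supp_code:
  assumes "is_code q n w d C" "w < d"
  shows "inj_on (supp n) C"
proof
  fix x y assume "x \<in> C" "y \<in> C" "supp n x = supp n y"
  then have "hdist n x y \<le> w"
    using hdist_le_card_supp_Un[of n x y] assms(1) unfolding is_code_def Jq_def wt_def by auto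
  then show "x = y"
    using assms \<open>x \<in> C\<close> \<open>y \<in> C\<close> unfolding is_code_def by force
qed

lemma steiner_system_of_code_supports:
  assumes "0 < t" "t \<le> k" "k < n"
    and C: "is_code q n k (2*k - t + 1) C" "card C * (k choose t) = n choose t"
  shows "steiner_system t k n {1..n} (supp n ` C)"
proof (rule steiner_system_of_packing[OF assms(1-3)])
  have supp_C: "\<forall>x\<in>C. supp n x \<subseteq> {1..n} \<and> card (supp n x) = k"
    using C(1) supp_subset unfolding is_code_def Jq_def wt_def by auto
  then show "\<forall>b\<in>supp n ` C. b \<subseteq> {1..n} \<and> card b = k"
    by blast
  show "card (supp n ` C) * (k choose t) = n choose t"
    using C inj_on_supp_code[OF C(1)] assms(2) by (simp add: card_image)
  show "\<forall>b\<in>supp n ` C. \<forall>b'\<in>supp n ` C. b \<noteq> b' \<longrightarrow> card (b \<inter> b') < t"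
  proof (clarify)
    fix x y assume "x \<in> C" "y \<in> C" "supp n x \<noteq> supp n y"
    then have "2*k - t + 1 \<le> card (supp n x \<union> supp n y)"
      using C(1) hdist_le_card_supp_Un[of n x y] unfolding is_code_def by fastforce
    moreover have "card (supp n x \<union> supp n y) + card (supp n x \<inter> supp n y) = k + k"
      using supp_C \<open>x \<in> C\<close> \<open>y \<in> C\<close> by (metis card_Un_Int finite_subset finite_atLeastAtMost)
    ultimately show "card (supp n x \<inter> supp n y) < t"
      using assms(2) by linarith
  qed
qed (use C(1) in \<open>simp add: is_code_def\<close>)

lemma steiner_system_of_code_cosupports:
  assumes "0 < t" "t \<le> k" "k < n"
    and C: "is_code q n (n - k) (n - t + 1) C" "card C * (k choose t) = n choose t"
  shows "steiner_system t k n {1..n} ((\<lambda>c. {1..n} - supp n c) ` C)"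
proof (rule steiner_system_of_packing[OF assms(1-3)])
  have supp_C: "\<forall>x\<in>C. supp n x \<subseteq> {1..n} \<and> card (supp n x) = n - k"
    using C(1) supp_subset unfolding is_code_def Jq_def wt_def by auto
  have cosupp_C: "\<forall>x\<in>C. {1..n} - supp n x \<subseteq> {1..n} \<and> card ({1..n} - supp n x) = k"
  proof
    fix x assume "x \<in> C"
    then have "supp n x \<subseteq> {1..n}" "card (supp n x) = n - k"
      using supp_C by blast+
    then have "card ({1..n} - supp n x) = n - (n - k)"
      by (simp add: card_Diff_subset finite_subset)
    then show "{1..n} - supp n x \<subseteq> {1..n} \<and> card ({1..n} - supp n x) = k"
      using assms(3) by simp
  qed
  then show "\<forall>b\<in>(\<lambda>c. {1..n} - supp n c) ` C. b \<subseteq> {1..n} \<and> card b = k"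
    by blast
  have "inj_on (supp n) C"
    by (rule inj_on_supp_code[OF C(1)]) (use assms(2,3) in linarith)
  then have "inj_on (\<lambda>c. {1..n} - supp n c) C"
    using supp_subset unfolding inj_on_def by (metis double_diff order_refl)
  then show "card ((\<lambda>c. {1..n} - supp n c) ` C) * (k choose t) = n choose t"
    using C(2) by (simp add: card_image)
  show "\<forall>b\<in>(\<lambda>c. {1..n} - supp n c) ` C. \<forall>b'\<in>(\<lambda>c. {1..n} - supp n c) ` C.
          b \<noteq> b' \<longrightarrow> card (b \<inter> b') < t"
  proof (clarify)
    fix x y assume "x \<in> C" "y \<in> C" "{1..n} - supp n x \<noteq> {1..n} - supp n y"
    then have far: "n - t + 1 \<le> card (supp n x \<union> supp n y)"
      using C(1) hdist_le_card_supp_Un[of n x y] unfolding is_code_def by fastforce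
    let ?I = "({1..n} - supp n x) \<inter> ({1..n} - supp n y)"
    have "?I \<subseteq> {1..n}"
      by blast
    moreover have "supp n x \<union> supp n y = {1..n} - ?I"
      using supp_C \<open>x \<in> C\<close> \<open>y \<in> C\<close> by auto
    ultimately have "card (supp n x \<union> supp n y) = n - card ?I"
      using card_Diff_subset[of ?I "{1..n}"] finite_subset by auto
    then show "card ?I < t"
      using far assms(1-3) by linarith
  qed
qed (use C(1) in \<open>simp add: is_code_def\<close>)

theorem mainTheorem6:
  fixes t k n :: nat
  assumes "0 < t" "t \<le> k" "k < n"
  shows
   "(\<forall>B. steiner_system t k n {1..n} B \<longrightarrow>
       (\<forall>q::nat. real q \<ge> real ((n-1) choose (t-1)) / real ((k-1) choose (t-1)) + 1 \<longrightarrow>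
          (\<exists>C. is_code q n k (2*k - t + 1) C
               \<and> real (card C) = real (n choose t) / real (k choose t)
               \<and> card C * card (anticode1 q n k t) = card (Jq q n k)
               \<and> supp n ` C = B))
     \<and> (\<forall>q::nat. real q \<ge> real (n choose t) / real (k choose t)
                     - real ((n-1) choose (t-1)) / real ((k-1) choose (t-1)) + 1 \<longrightarrow>
          (\<exists>C. is_code q n (n-k) (n - t + 1) C
               \<and> real (card C) = real (n choose t) / real ((n - (n-k)) choose t)
               \<and> card C * card (anticode2 q n (n-k) t) = card (Jq q n (n-k))
               \<and> (\<lambda>c. {1..n} - supp n c) ` C = B)))
    \<and> ((\<not> (\<exists>(N::nat set) B. steiner_system t k n N B)) \<longrightarrow>
       (\<forall>q::nat.
          \<not> (\<exists>C. is_code q n k (2*k - t + 1) C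
                 \<and> real (card C) = real (n choose t) / real (k choose t))
        \<and> \<not> (\<exists>C. is_code q n (n-k) (n - t + 1) C
                 \<and> real (card C) = real (n choose t) / real (k choose t))))"
proof (intro conjI allI impI)
  have "0 < k choose t"
    using assms(2) by simp
  note optimal_size = real_eq_divide_iff[OF this]
  fix q assume no_steiner: "\<not> (\<exists>(N::nat set) B. steiner_system t k n N B)"
  show "\<not> (\<exists>C. is_code q n k (2*k - t + 1) C
                 \<and> real (card C) = real (n choose t) / real (k choose t))"
    using steiner_system_of_code_supports[OF assms] no_steiner optimal_size by blast
  show "\<not> (\<exists>C. is_code q n (n-k) (n - t + 1) C
                 \<and> real (card C) = real (n choose t) / real (k choose t))"
    using steiner_system_of_code_cosupports[OF assms] no_steiner optimal_size by blast
qed (fact steiner_block_code steiner_coblock_code)+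

end
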